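(* Let $d\ge 2$ and let $\mathcal U,\mathcal H$ be as defined in the context. Then $\operatorname{rs}(\mathcal U,\mathcal H)\le 2^{d-1}$.
   Context: Let $d\ge 2$. Define $\mathcal U=\{(x_1,\dots,x_d): x_1,\dots,x_{d-1}\in\{-1,1\},\ x_d\in\{-(d-1),\dots,d-1\}\}$ (integers) and $\mathcal H=\{\{x\in\mathbb R^d:\sum_{i=1}^d a_ix_i=0\}: a_1,\dots,a_{d-1}\in\{0,1\},\ a_d=-1\}$. $\operatorname{rs}(\mathcal U,\mathcal H)=\max_{S}\,|\{p\in\mathcal U: p\in S\}|\cdot|\{h\in\mathcal H: S\subseteq h\}|$, the maximum over all affine subspaces $S\subseteq\mathbb R^d$. *)

theory Defs
  imports "HOL-Analysis.Analysis"
begin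

text \<open>Points of R^d are vectors of type real^'n with d = CARD('n); the index type
  is linearly ordered so that the "last" coordinate x_d is the one at the maximal index.\<close>

definition last_idx :: "'n::{finite,linorder}" where
  "last_idx = Max (UNIV :: 'n set)"

definition U_pts :: "(real^'n::{finite,linorder}) set" where
  "U_pts = {x. (\<forall>i. i \<noteq> last_idx \<longrightarrow> x$i \<in> {-1, 1}) \<and>
               x$last_idx \<in> real_of_int ` {-(int CARD('n) - 1) .. int CARD('n) - 1}}"

definition H_planes :: "(real^'n::{finite,linorder}) set set" where
  "H_planes = {{x. (\<Sum>i\<in>UNIV. a i * x$i) = 0} | a.
                  a last_idx = -1 \<and> (\<forall>i. i \<noteq> last_idx \<longrightarrow> a i \<in> {0, 1})}"

definition rs :: "'a::real_vector set \<Rightarrow> 'a set set \<Rightarrow> nat" where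
  "rs U H = Max {card (U \<inter> S) * card {h \<in> H. S \<subseteq> h} | S. affine S}"

end

theory Submission
  imports Defs
begin

text \<open>Let I be the set of the first d - 1 coordinates. A hyperplane of H with coefficient
  vector (a, -1) that contains S expresses the last coordinate of every point x of S as the
  inner product of a and x on I. Hence for two points p, q of U in S and two such coefficient
  vectors a, b the differences a - b and p - q, restricted to I, are orthogonal, and both
  restrictions are injective on the respective sets.
  Now a set P of vectors with entries in a two-element set and a set A of vectors with entries
  in another two-element set, with orthogonal difference sets, satisfy |P| |A| \<le> 2^|I|, by
  induction on I: for a fixed coordinate j, either all of A agree at j, and then each of the two
  halves of P fixed at j is determined by the remaining coordinates; or two members of A differ
  at j, and then orthogonality forces all of P to be determined by the remaining coordinates,
  while A splits into two halves.\<close>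

definition differences_orthogonal :: "'i set \<Rightarrow> ('i \<Rightarrow> 'a::comm_ring) set \<Rightarrow> ('i \<Rightarrow> 'a) set \<Rightarrow> bool" where
  "differences_orthogonal I P A \<longleftrightarrow>
     (\<forall>p\<in>P. \<forall>q\<in>P. \<forall>a\<in>A. \<forall>b\<in>A. (\<Sum>i\<in>I. (a i - b i) * (p i - q i)) = 0)"

lemma differences_orthogonal_mono:
  "differences_orthogonal I P A \<Longrightarrow> Q \<subseteq> P \<Longrightarrow> B \<subseteq> A \<Longrightarrow> differences_orthogonal I Q B"
  unfolding differences_orthogonal_def by blast

lemma differences_orthogonal_restrict:
  assumes "finite I" "j \<notin> I" "differences_orthogonal (insert j I) P A" "\<forall>a\<in>A. a j = c"
  shows "differences_orthogonal I ((\<lambda>f. restrict f I) ` P) ((\<lambda>f. restrict f I) ` A)"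
  unfolding differences_orthogonal_def
proof (intro ballI, elim imageE)
  fix p q a b p' q' a' b'
  assume "p = restrict p' I" "p' \<in> P" "q = restrict q' I" "q' \<in> P"
    "a = restrict a' I" "a' \<in> A" "b = restrict b' I" "b' \<in> A"
  moreover have "(\<Sum>i\<in>insert j I. (a' i - b' i) * (p' i - q' i)) = 0"
    using assms(3) \<open>p' \<in> P\<close> \<open>q' \<in> P\<close> \<open>a' \<in> A\<close> \<open>b' \<in> A\<close>
    unfolding differences_orthogonal_def by blast
  moreover have "a' j = b' j"
    using assms(4) \<open>a' \<in> A\<close> \<open>b' \<in> A\<close> by metis
  ultimately show "(\<Sum>i\<in>I. (a i - b i) * (p i - q i)) = 0"
    using assms(1,2) by simp
qed

lemma image_restrict_subset_PiE:
  assumes "Q \<subseteq> (\<Pi>\<^sub>E i\<in>J. B i)" "I \<subseteq> J"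
  shows "(\<lambda>f. restrict f I) ` Q \<subseteq> (\<Pi>\<^sub>E i\<in>I. B i)"
proof (rule image_subsetI)
  fix f assume "f \<in> Q"
  then have "\<forall>i\<in>I. f i \<in> B i"
    using assms by (auto simp: PiE_iff)
  then show "restrict f I \<in> (\<Pi>\<^sub>E i\<in>I. B i)"
    by (simp add: restrict_PiE_iff)
qed

lemma inj_on_restrict_if_coordinate_constant:
  assumes "Q \<subseteq> (\<Pi>\<^sub>E i\<in>insert j I. B i)" "\<forall>f\<in>Q. f j = c"
  shows "inj_on (\<lambda>f. restrict f I) Q"
proof (rule inj_onI)
  fix f g assume "f \<in> Q" "g \<in> Q" "restrict f I = restrict g I"
  moreover have "f i = g i" if "i \<in> I" for i
    using fun_cong[OF \<open>restrict f I = restrict g I\<close>, of i] that by simp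
  moreover have "f j = g j"
    using assms(2) \<open>f \<in> Q\<close> \<open>g \<in> Q\<close> by metis
  ultimately show "f = g"
    using assms(1) by (intro PiE_ext[of f "insert j I" B]) auto
qed

lemma inj_on_restrict_if_differences_orthogonal:
  fixes P A :: "('i \<Rightarrow> 'a::idom) set"
  assumes "finite I" "j \<notin> I" "P \<subseteq> (\<Pi>\<^sub>E i\<in>insert j I. B i)"
    and "differences_orthogonal (insert j I) P A" "a \<in> A" "b \<in> A" "a j \<noteq> b j"
  shows "inj_on (\<lambda>f. restrict f I) P"
proof (rule inj_onI)
  fix p q assume "p \<in> P" "q \<in> P" "restrict p I = restrict q I"
  then have agree: "\<forall>i\<in>I. p i = q i"
    by (metis restrict_apply')
  moreover have "(\<Sum>i\<in>insert j I. (a i - b i) * (p i - q i)) = 0"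
    using assms(4-6) \<open>p \<in> P\<close> \<open>q \<in> P\<close> unfolding differences_orthogonal_def by blast
  ultimately have "p j = q j"
    using assms(1,2,7) by simp
  then show "p = q"
    using \<open>p \<in> P\<close> \<open>q \<in> P\<close> agree assms(3) by (intro PiE_ext[of p "insert j I" B]) auto
qed

lemma card_split_by_coordinate:
  assumes "finite P" "P \<subseteq> (\<Pi>\<^sub>E i\<in>J. {\<alpha>, \<beta>})" "j \<in> J" "\<alpha> \<noteq> \<beta>"
  shows "card P = card {p\<in>P. p j = \<alpha>} + card {p\<in>P. p j = \<beta>}"
proof -
  have "p j \<in> {\<alpha>, \<beta>}" if "p \<in> P" for p
    using PiE_mem[of p J "\<lambda>_. {\<alpha>, \<beta>}" j] assms(2,3) that by blast
  then have "P = {p\<in>P. p j = \<alpha>} \<union> {p\<in>P. p j = \<beta>}"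
    by blast
  moreover have "card ({p\<in>P. p j = \<alpha>} \<union> {p\<in>P. p j = \<beta>}) =
      card {p\<in>P. p j = \<alpha>} + card {p\<in>P. p j = \<beta>}"
    using assms(1,4) by (intro card_Un_disjoint) auto
  ultimately show ?thesis
    by simp
qed

lemma card_mult_card_le_if_differences_orthogonal:
  fixes P A :: "('i \<Rightarrow> 'a::idom) set"
  assumes "finite I" "\<alpha> \<noteq> \<beta>" "\<gamma> \<noteq> \<delta>"
    and "P \<subseteq> (\<Pi>\<^sub>E i\<in>I. {\<alpha>, \<beta>})" "A \<subseteq> (\<Pi>\<^sub>E i\<in>I. {\<gamma>, \<delta>})"
    and "differences_orthogonal I P A"
  shows "card P * card A \<le> 2 ^ card I"
  using assms(1,4-6)
proof (induction I arbitrary: P A rule: finite_induct)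
  case empty
  then have "card P \<le> 1" "card A \<le> 1"
    by (auto simp: subset_singleton_iff)
  then show ?case
    using mult_le_mono by fastforce
next
  case (insert j I)
  let ?\<rho> = "\<lambda>f. restrict f I"
  have restricted_bound: "card Q * card B \<le> 2 ^ card I"
    if "Q \<subseteq> P" "B \<subseteq> A" "\<forall>a\<in>B. a j = c" "inj_on ?\<rho> Q" for Q B c
  proof -
    have "B \<subseteq> (\<Pi>\<^sub>E i\<in>insert j I. {\<gamma>, \<delta>})"
      using that(2) insert.prems(2) by (rule order_trans)
    then have "inj_on ?\<rho> B"
      using that(3) by (rule inj_on_restrict_if_coordinate_constant)
    moreover have "card (?\<rho> ` Q) * card (?\<rho> ` B) \<le> 2 ^ card I"
    proof (rule insert.IH)
      show "?\<rho> ` Q \<subseteq> (\<Pi>\<^sub>E i\<in>I. {\<alpha>, \<beta>})"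
        using order_trans[OF that(1) insert.prems(1)] subset_insertI by (rule image_restrict_subset_PiE)
      show "?\<rho> ` B \<subseteq> (\<Pi>\<^sub>E i\<in>I. {\<gamma>, \<delta>})"
        using order_trans[OF that(2) insert.prems(2)] subset_insertI by (rule image_restrict_subset_PiE)
      have "differences_orthogonal (insert j I) Q B"
        using differences_orthogonal_mono insert.prems(3) that(1,2) .
      then show "differences_orthogonal I (?\<rho> ` Q) (?\<rho> ` B)"
        by (rule differences_orthogonal_restrict[OF insert.hyps(1,2) _ that(3)])
    qed
    ultimately show ?thesis
      using that(4) by (simp add: card_image)
  qed
  have finite: "finite P" "finite A"
    using insert.hyps(1) insert.prems(1,2) by (auto intro: finite_subset finite_PiE)
  have card_insert: "card (insert j I) = Suc (card I)"
    using insert.hyps by simp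
  show ?case
  proof (cases "\<exists>c. \<forall>a\<in>A. a j = c")
    case True
    then obtain c where "\<forall>a\<in>A. a j = c" by blast
    have part_bound: "card {p\<in>P. p j = x} * card A \<le> 2 ^ card I" for x
    proof (rule restricted_bound[OF _ _ \<open>\<forall>a\<in>A. a j = c\<close>])
      show "inj_on ?\<rho> {p\<in>P. p j = x}"
        using insert.prems(1)
        by (intro inj_on_restrict_if_coordinate_constant[where B = "\<lambda>_. {\<alpha>, \<beta>}" and c = x]) auto
    qed auto
    have "card P = card {p\<in>P. p j = \<alpha>} + card {p\<in>P. p j = \<beta>}"
      using finite(1) insert.prems(1) insertI1 \<open>\<alpha> \<noteq> \<beta>\<close> by (rule card_split_by_coordinate)
    then have "card P * card A = card {p\<in>P. p j = \<alpha>} * card A + card {p\<in>P. p j = \<beta>} * card A"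
      by (simp add: add_mult_distrib)
    also have "\<dots> \<le> 2 ^ card I + 2 ^ card I"
      by (intro add_le_mono part_bound)
    finally show ?thesis
      using card_insert by simp
  next
    case False
    then obtain a b where "a \<in> A" "b \<in> A" "a j \<noteq> b j" by blast
    have inj: "inj_on ?\<rho> P"
      using insert.hyps insert.prems(1,3) \<open>a \<in> A\<close> \<open>b \<in> A\<close> \<open>a j \<noteq> b j\<close>
      by (rule inj_on_restrict_if_differences_orthogonal)
    have part_bound: "card P * card {a\<in>A. a j = x} \<le> 2 ^ card I" for x
      by (rule restricted_bound[of P "{a\<in>A. a j = x}" x, OF _ _ _ inj]) auto
    have "card A = card {a\<in>A. a j = \<gamma>} + card {a\<in>A. a j = \<delta>}"
      using finite(2) insert.prems(2) insertI1 \<open>\<gamma> \<noteq> \<delta>\<close> by (rule card_split_by_coordinate)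
    then have "card P * card A = card P * card {a\<in>A. a j = \<gamma>} + card P * card {a\<in>A. a j = \<delta>}"
      by (simp add: add_mult_distrib2)
    also have "\<dots> \<le> 2 ^ card I + 2 ^ card I"
      by (intro add_le_mono part_bound)
    finally show ?thesis
      using card_insert by simp
  qed
qed

definition H_coeffs_containing :: "(real^'n::{finite,linorder}) set \<Rightarrow> ('n \<Rightarrow> real) set" where
  "H_coeffs_containing S =
     {a. a last_idx = -1 \<and> (\<forall>i. i \<noteq> last_idx \<longrightarrow> a i \<in> {0, 1}) \<and>
         (\<forall>x\<in>S. (\<Sum>i\<in>UNIV. a i * x$i) = 0)}"

lemma card_H_planes_containing_le:
  "card {h \<in> H_planes. S \<subseteq> h} \<le> card (H_coeffs_containing S)"
proof -
  have "H_coeffs_containing S \<subseteq> (\<Pi>\<^sub>E i\<in>UNIV. {-1, 0, 1})"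
    by (force simp: H_coeffs_containing_def PiE_UNIV_domain)
  then have "finite (H_coeffs_containing S)"
    by (rule finite_subset) (intro finite_PiE; simp)
  moreover have "{h \<in> H_planes. S \<subseteq> h} \<subseteq> (\<lambda>a. {x. (\<Sum>i\<in>UNIV. a i * x$i) = 0}) ` H_coeffs_containing S"
    unfolding H_planes_def H_coeffs_containing_def by auto
  ultimately show ?thesis
    by (meson card_image_le card_mono finite_imageI le_trans)
qed

lemma sum_front_eq_last_coordinate:
  assumes "a \<in> H_coeffs_containing S" "x \<in> S"
  shows "(\<Sum>i\<in>- {last_idx}. a i * x$i) = x$last_idx"
proof -
  have "0 = (\<Sum>i\<in>UNIV. a i * x$i)"
    using assms by (simp add: H_coeffs_containing_def)
  also have "\<dots> = a last_idx * x$last_idx + (\<Sum>i\<in>- {last_idx}. a i * x$i)"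
    by (rule sum.remove[of UNIV, simplified Compl_eq_Diff_UNIV[symmetric]]) auto
  finally show ?thesis
    using assms(1) by (simp add: H_coeffs_containing_def)
qed

definition front :: "real^'n::{finite,linorder} \<Rightarrow> 'n \<Rightarrow> real" where
  "front x = restrict (\<lambda>i. x$i) (- {last_idx})"

lemma inj_on_front:
  assumes "a \<in> H_coeffs_containing S"
  shows "inj_on front S"
proof (rule inj_onI)
  fix x y assume "x \<in> S" "y \<in> S" "front x = front y"
  have agree: "x$i = y$i" if "i \<noteq> last_idx" for i
    using fun_cong[OF \<open>front x = front y\<close>, of i] that unfolding front_def by simp
  have "x$last_idx = (\<Sum>i\<in>- {last_idx}. a i * x$i)"
    using sum_front_eq_last_coordinate[OF assms \<open>x \<in> S\<close>] by simp
  also have "\<dots> = (\<Sum>i\<in>- {last_idx}. a i * y$i)"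
    using agree by simp
  also have "\<dots> = y$last_idx"
    using sum_front_eq_last_coordinate[OF assms \<open>y \<in> S\<close>] by simp
  finally show "x = y"
    using agree by (metis vec_eq_iff)
qed

lemma inj_on_restrict_H_coeffs_containing:
  "inj_on (\<lambda>a. restrict a (- {last_idx})) (H_coeffs_containing S)"
proof (rule inj_onI)
  fix a b assume "a \<in> H_coeffs_containing S" "b \<in> H_coeffs_containing S"
    "restrict a (- {last_idx}) = restrict b (- {last_idx})"
  show "a = b"
  proof
    fix i
    show "a i = b i"
    proof (cases "i = last_idx")
      case True
      then show ?thesis
        using \<open>a \<in> H_coeffs_containing S\<close> \<open>b \<in> H_coeffs_containing S\<close>
        by (simp add: H_coeffs_containing_def)
    next
      case False
      then show ?thesis
        using fun_cong[OF \<open>restrict a _ = restrict b _\<close>, of i] by simp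
    qed
  qed
qed

lemma differences_orthogonal_front_H_coeffs:
  "differences_orthogonal (- {last_idx})
     (front ` S) ((\<lambda>a. restrict a (- {last_idx})) ` H_coeffs_containing S)"
  unfolding differences_orthogonal_def
proof (intro ballI, elim imageE)
  fix p q a b x y a' b'
  assume "p = front x" "q = front y" "a = restrict a' (- {last_idx})" "b = restrict b' (- {last_idx})"
    and "x \<in> S" "y \<in> S" "a' \<in> H_coeffs_containing S" "b' \<in> H_coeffs_containing S"
  then have "(\<Sum>i\<in>- {last_idx}. (a i - b i) * (p i - q i)) =
      (\<Sum>i\<in>- {last_idx}. a' i * x$i) - (\<Sum>i\<in>- {last_idx}. b' i * x$i)
      - ((\<Sum>i\<in>- {last_idx}. a' i * y$i) - (\<Sum>i\<in>- {last_idx}. b' i * y$i))"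
    by (simp add: front_def sum_subtractf[symmetric] algebra_simps)
  also have "\<dots> = 0"
    using \<open>x \<in> S\<close> \<open>y \<in> S\<close> \<open>a' \<in> H_coeffs_containing S\<close> \<open>b' \<in> H_coeffs_containing S\<close>
    by (simp add: sum_front_eq_last_coordinate)
  finally show "(\<Sum>i\<in>- {last_idx}. (a i - b i) * (p i - q i)) = 0" .
qed

lemma card_U_pts_inter_mult_card_H_coeffs_le:
  fixes S :: "(real^'n::{finite,linorder}) set"
  shows "card (U_pts \<inter> S) * card (H_coeffs_containing S) \<le> 2 ^ (CARD('n) - 1)"
proof (cases "H_coeffs_containing S = {}")
  case True
  then show ?thesis by simp
next
  case False
  let ?I = "- {last_idx :: 'n}" and ?co = "\<lambda>a. restrict a (- {last_idx :: 'n})"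
  have "card (front ` (U_pts \<inter> S)) * card (?co ` H_coeffs_containing S) \<le> 2 ^ card ?I"
  proof (rule card_mult_card_le_if_differences_orthogonal[of ?I "-1" 1 0 1])
    show "front ` (U_pts \<inter> S) \<subseteq> (\<Pi>\<^sub>E i\<in>?I. {-1, 1})"
      unfolding front_def image_subset_iff restrict_PiE_iff by (auto simp: U_pts_def)
    show "?co ` H_coeffs_containing S \<subseteq> (\<Pi>\<^sub>E i\<in>?I. {0, 1})"
      unfolding image_subset_iff restrict_PiE_iff by (auto simp: H_coeffs_containing_def)
    show "differences_orthogonal ?I (front ` (U_pts \<inter> S)) (?co ` H_coeffs_containing S)"
      by (rule differences_orthogonal_mono[OF differences_orthogonal_front_H_coeffs[of S]]) auto
  qed simp_all
  moreover have "inj_on front (U_pts \<inter> S)"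
    using False inj_on_front inj_on_Int by blast
  moreover have "card ?I = CARD('n) - 1"
    by (simp add: Compl_eq_Diff_UNIV card_Diff_singleton)
  ultimately show ?thesis
    using inj_on_restrict_H_coeffs_containing[of S] by (simp add: card_image)
qed

theorem mainTheorem7:
  assumes "CARD('n) \<ge> 2"
  shows "rs (U_pts :: (real^'n::{finite,linorder}) set) H_planes \<le> 2 ^ (CARD('n) - 1)"
proof -
  let ?M = "{card ((U_pts :: (real^'n::{finite,linorder}) set) \<inter> S) * card {h \<in> H_planes. S \<subseteq> h}
            | S. affine S}"
  have "m \<le> 2 ^ (CARD('n) - 1)" if "m \<in> ?M" for m
  proof -
    from that obtain S :: "(real^'n::{finite,linorder}) set"
      where "m = card (U_pts \<inter> S) * card {h \<in> H_planes. S \<subseteq> h}" by blast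
    also have "\<dots> \<le> card (U_pts \<inter> S) * card (H_coeffs_containing S)"
      by (intro mult_le_mono2 card_H_planes_containing_le)
    also have "\<dots> \<le> 2 ^ (CARD('n) - 1)"
      by (rule card_U_pts_inter_mult_card_H_coeffs_le)
    finally show ?thesis .
  qed
  moreover have "finite ?M" "?M \<noteq> {}"
    using calculation finite_nat_set_iff_bounded_le affine_UNIV by blast+
  ultimately show ?thesis
    unfolding rs_def by (simp add: Max_le_iff)
qed

end
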